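(* Let $f,a,b,h_{1},h_{2}\in\mathbb{C}[x]$ be nonzero polynomials satisfying \[ b(x)=-h_{1}(x)h_{2}(x),\qquad f(x)a(x)=f(x-1)h_{1}(x)+f(x+1)h_{2}(x+1). \] Let $d=\max\{\deg(a),\deg(h_{1}),\deg(h_{2})\}$, $d_{f}=\deg(f)$, and write $a(x)=\sum_{i=0}^{d}a^{(i)}x^{i}$, $h_{1}(x)=\sum_{i=0}^{d}h_{1}^{(i)}x^{i}$, $h_{2}(x)=\sum_{i=0}^{d}h_{2}^{(i)}x^{i}$. Let $c_{1},c_{2}$ be the leading coefficients of $h_{1},h_{2}$, and $A,B$ the leading coefficients of $a,b$. Then: (1) If $\deg(a)=\deg(h_{1})>\deg(h_{2})$, then $c_{1}=A$, $c_{2}=-\frac{B}{A}$ and $d_{f}=\frac{a^{(d-1)}-h_{1}^{(d-1)}-h_{2}^{(d-1)}}{-A}$. (2) If $\deg(a)=\deg(h_{2})>\deg(h_{1})$, then $c_{1}=-\frac{B}{A}$, $c_{2}=A$ and $d_{f}=\frac{a^{(d-1)}-h_{1}^{(d-1)}-h_{2}^{(d-1)}-dA}{A}$. (3) If $\deg(h_{1})=\deg(h_{2})>\deg(a)$, then $\{c_{1},c_{2}\}=\{\sqrt{B},-\sqrt{B}\}$ and $d_{f}=\frac{a^{(d-1)}-h_{1}^{(d-1)}-h_{2}^{(d-1)}-dh_{2}^{(d)}}{h_{2}^{(d)}-h_{1}^{(d)}}$. (4) If $\deg(h_{1})=\deg(h_{2})=\deg(a)$, then $c_{1},c_{2}$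 are the roots of $x^{2}-Ax-B=0$, and: (a) if $c=c_{1}=c_{2}$ (so $B=-c^{2}$, $A=2c$), then $d_{f}$ is a solution of \[ \left(a^{(d-2)}-h_{1}^{(d-2)}-\left(h_{2}^{(d-2)}+(d-1)h_{2}^{(d-1)}+\tbinom{d}{2}h_{2}^{(d)}\right)\right)+d_{f}\left(h_{1}^{(d-1)}-\left(h_{2}^{(d-1)}+dh_{2}^{(d)}\right)\right)-\tbinom{d_{f}}{2}A=0; \] (b) otherwise $d_{f}=\frac{a^{(d-1)}-h_{1}^{(d-1)}-h_{2}^{(d-1)}-dh_{2}^{(d)}}{h_{2}^{(d)}-h_{1}^{(d)}}$.
   Context: Coefficients $a^{(i)},h_1^{(i)},h_2^{(i)}$ with $i<0$ are taken to be $0$. *)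

theory Defs
  imports "HOL-Computational_Algebra.Polynomial" "HOL-Analysis.Analysis"
begin

definition cf :: "complex poly \<Rightarrow> int \<Rightarrow> complex" where
  "cf p i = (if i < 0 then 0 else coeff p (nat i))"

end

theory Submission
  imports Defs
begin

text \<open>Let n = deg f. Expand f(x \<plusminus> 1) and h2(x + 1) by Taylor's formula and compare the
  coefficients of x^(n+d), x^(n+d-1) and x^(n+d-2) on both sides of the equation; the leading
  coefficient of f cancels each time. The first comparison gives a^(d) = h1^(d) + h2^(d), the
  second a linear equation for n with coefficient h2^(d) - h1^(d), and the third, when that
  coefficient vanishes, a quadratic one. The four cases of the theorem differ only in which of
  a^(d), h1^(d), h2^(d) vanish.\<close>

lemma pcompose_power: "pcompose (p ^ n) q = pcompose p q ^ n"
  for p q :: "'a::comm_semiring_1 poly"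
  by (induction n) (simp_all add: pcompose_mult pcompose_1)

lemma pcompose_monom: "pcompose (monom c n) q = smult c (q ^ n)"
  for q :: "'a::comm_semiring_1 poly"
  by (simp add: monom_altdef pcompose_smult pcompose_power pcompose_pCons)

lemma coeff_pcompose_shift:
  fixes p :: "'a::comm_semiring_1 poly"
  assumes "degree p \<le> N"
  shows "coeff (pcompose p [:c, 1:]) k = (\<Sum>i\<le>N. of_nat (i choose k) * c ^ (i - k) * coeff p i)"
proof -
  have "pcompose p [:c, 1:] = (\<Sum>i\<le>N. smult (coeff p i) ([:c, 1:] ^ i))"
    by (subst poly_as_sum_of_monoms'[OF assms, symmetric]) (simp add: pcompose_sum pcompose_monom)
  moreover have "coeff ([:c, 1:] ^ i) k = of_nat (i choose k) * c ^ (i - k)" for i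
  proof (cases "k \<le> i")
    case True
    then show ?thesis by (simp add: coeff_linear_poly_power)
  next
    case False
    then show ?thesis by (simp add: coeff_eq_0 degree_linear_power binomial_eq_0)
  qed
  ultimately show ?thesis by (simp add: coeff_sum mult_ac)
qed

lemma cf_nonzero_bounds: "cf p i \<noteq> 0 \<Longrightarrow> 0 \<le> i \<and> i \<le> int (degree p)"
  unfolding cf_def by (auto split: if_splits dest: le_degree)

lemma cf_add: "cf (p + q) i = cf p i + cf q i"
  by (simp add: cf_def)

lemma cf_mult_eq_sum:
  assumes "finite S" and "\<And>i. cf p i * cf q (k - i) \<noteq> 0 \<Longrightarrow> i \<in> S"
  shows "cf (p * q) k = (\<Sum>i\<in>S. cf p i * cf q (k - i))"
proof (cases "k < 0")
  case True
  then have "cf p i * cf q (k - i) = 0" for i by (simp add: cf_def)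
  then have "(\<Sum>i\<in>S. cf p i * cf q (k - i)) = 0" by (intro sum.neutral) blast
  with True show ?thesis by (simp add: cf_def[of "p * q"])
next
  case False
  have "cf (p * q) k = (\<Sum>i\<le>nat k. coeff p i * coeff q (nat k - i))"
    using False by (simp add: cf_def coeff_mult)
  also have "\<dots> = (\<Sum>i\<in>{0..k}. cf p i * cf q (k - i))"
    by (rule sum.reindex_bij_witness[of _ nat int])
      (use False in \<open>auto simp: cf_def nat_diff_distrib\<close>)
  also have "\<dots> = (\<Sum>i\<in>S. cf p i * cf q (k - i))"
    by (rule sum.mono_neutral_cong) (use assms in \<open>auto dest: cf_nonzero_bounds\<close>)
  finally show ?thesis .
qed

lemma cf_mult_top:
  assumes "degree p \<le> m" "degree q \<le> l"
  shows "cf (p * q) (int m + int l - int k)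
    = (\<Sum>j\<le>k. cf p (int m - int j) * cf q (int l - int (k - j)))"
proof -
  have "cf (p * q) (int m + int l - int k)
      = (\<Sum>i\<in>(\<lambda>j. int m - int j) ` {..k}. cf p i * cf q (int m + int l - int k - i))"
  proof (rule cf_mult_eq_sum)
    fix i assume "cf p i * cf q (int m + int l - int k - i) \<noteq> 0"
    then have "0 \<le> i" "i \<le> int m" "int m + int l - int k - i \<le> int l"
      using assms cf_nonzero_bounds[of p i] cf_nonzero_bounds[of q "int m + int l - int k - i"] by auto
    then show "i \<in> (\<lambda>j. int m - int j) ` {..k}"
      by (intro image_eqI[of _ _ "nat (int m - i)"]) auto
  qed simp
  also have "\<dots> = (\<Sum>j\<le>k. cf p (int m - int j) * cf q (int l - int (k - j)))"
    by (subst sum.reindex) (auto simp: inj_on_def of_nat_diff algebra_simps intro!: sum.cong)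
  finally show ?thesis .
qed

lemma cf_pcompose_shift_0:
  assumes "degree p \<le> N"
  shows "cf (pcompose p [:c, 1:]) (int N) = cf p (int N)"
proof -
  have "coeff (pcompose p [:c, 1:]) N
      = (\<Sum>i\<in>{N}. of_nat (i choose N) * c ^ (i - N) * coeff p i)"
    unfolding coeff_pcompose_shift[OF assms] by (rule sum.mono_neutral_right) (auto simp: binomial_eq_0)
  then show ?thesis by (simp add: cf_def)
qed

lemma cf_pcompose_shift_1:
  assumes "degree p \<le> N"
  shows "cf (pcompose p [:c, 1:]) (int N - 1) = cf p (int N - 1) + of_nat N * c * cf p (int N)"
proof (cases N)
  case 0
  then show ?thesis by (simp add: cf_def)
next
  case (Suc M)
  have "coeff (pcompose p [:c, 1:]) M
      = (\<Sum>i\<in>{M, Suc M}. of_nat (i choose M) * c ^ (i - M) * coeff p i)"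
    unfolding coeff_pcompose_shift[OF assms] by (rule sum.mono_neutral_right) (auto simp: Suc binomial_eq_0)
  moreover have "nat (1 + int M) = Suc M" by simp
  ultimately show ?thesis using Suc by (simp add: cf_def algebra_simps)
qed

lemma cf_pcompose_shift_2:
  assumes "degree p \<le> N"
  shows "cf (pcompose p [:c, 1:]) (int N - 2)
    = cf p (int N - 2) + (of_nat N - 1) * c * cf p (int N - 1) + of_nat (N choose 2) * c ^ 2 * cf p (int N)"
proof (cases "N < 2")
  case True
  then show ?thesis by (auto simp: cf_def less_2_cases_iff)
next
  case False
  then obtain M where M: "N = Suc (Suc M)" by (metis add_2_eq_Suc le_add_diff_inverse not_less)
  have "coeff (pcompose p [:c, 1:]) M
      = (\<Sum>i\<in>{M, Suc M, Suc (Suc M)}. of_nat (i choose M) * c ^ (i - M) * coeff p i)"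
    unfolding coeff_pcompose_shift[OF assms] by (rule sum.mono_neutral_right) (auto simp: M binomial_eq_0)
  moreover have "Suc (Suc M) choose M = Suc (Suc M) choose 2"
    by (metis add_2_eq_Suc' binomial_symmetric diff_add_inverse2 le_add2)
  moreover have "nat (1 + int M) = Suc M" "nat (2 + int M) = Suc (Suc M)" by simp_all
  ultimately show ?thesis using M by (simp add: cf_def algebra_simps)
qed

lemma cf_degree: "cf p (int (degree p)) = lead_coeff p"
  by (simp add: cf_def)

lemma cf_at_degree_bound:
  "degree p \<le> n \<Longrightarrow> cf p (int n) = (if degree p = n then lead_coeff p else 0)"
  by (simp add: cf_def coeff_eq_0)

locale shift_equation =
  fixes f a h1 h2 :: "complex poly" and d :: nat
  assumes f_nonzero: "f \<noteq> 0"
    and degree_a_le: "degree a \<le> d" and degree_h1_le: "degree h1 \<le> d"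
    and degree_h2_le: "degree h2 \<le> d"
    and equation: "f * a = pcompose f [:-1, 1:] * h1 + pcompose f [:1, 1:] * pcompose h2 [:1, 1:]"
begin

lemma top_coeff_balance:
  defines "n \<equiv> int (degree f)"
  shows "(\<Sum>j\<le>k. cf f (n - int j) * cf a (int d - int (k - j)))
    = (\<Sum>j\<le>k. cf (pcompose f [:-1, 1:]) (n - int j) * cf h1 (int d - int (k - j)))
    + (\<Sum>j\<le>k. cf (pcompose f [:1, 1:]) (n - int j) * cf (pcompose h2 [:1, 1:]) (int d - int (k - j)))"
proof -
  have "degree (pcompose f [:c, 1:]) \<le> degree f" "degree (pcompose h2 [:c, 1:]) \<le> d" for c :: complex
    using degree_h2_le by (simp_all add: degree_pcompose)
  then show ?thesis
    using arg_cong[OF equation, of "\<lambda>p. cf p (n + int d - int k)"]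
    by (simp add: n_def cf_add cf_mult_top degree_a_le degree_h1_le)
qed

lemma leading_coeff_balance: "cf a d = cf h1 d + cf h2 d"
proof -
  have "lead_coeff f * cf a d = lead_coeff f * cf h1 d + lead_coeff f * cf h2 d"
    using top_coeff_balance[of 0]
    by (simp add: cf_pcompose_shift_0 degree_h2_le cf_degree)
  then show ?thesis
    using f_nonzero by (simp flip: distrib_left)
qed

lemma subleading_coeff_balance:
  "cf a (int d - 1) = cf h1 (int d - 1) + cf h2 (int d - 1) + of_nat d * cf h2 d
     + of_nat (degree f) * (cf h2 d - cf h1 d)"
proof -
  have "lead_coeff f * cf a (int d - 1) = lead_coeff f * (cf h1 (int d - 1) + cf h2 (int d - 1)
    + of_nat d * cf h2 d + of_nat (degree f) * (cf h2 d - cf h1 d))"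
    using top_coeff_balance[of 1] leading_coeff_balance
    by (simp add: cf_pcompose_shift_0 cf_pcompose_shift_1 degree_h2_le cf_degree algebra_simps)
  then show ?thesis
    using f_nonzero by simp
qed

lemma subsubleading_coeff_balance:
  assumes "cf h1 d = cf h2 d"
  shows "(cf a (int d - 2) - cf h1 (int d - 2)
           - (cf h2 (int d - 2) + (of_nat d - 1) * cf h2 (int d - 1) + of_nat (d choose 2) * cf h2 d))
         + of_nat (degree f) * (cf h1 (int d - 1) - (cf h2 (int d - 1) + of_nat d * cf h2 d))
         - of_nat (degree f choose 2) * cf a d = 0"
    (is "?E = 0")
proof -
  have "lead_coeff f * ?E = 0"
    using top_coeff_balance[of 2] leading_coeff_balance subleading_coeff_balance assms
    by (simp add: numeral_2_eq_2 cf_pcompose_shift_0 cf_pcompose_shift_1 cf_pcompose_shift_2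
        degree_h2_le cf_degree algebra_simps)
  then show ?thesis
    using f_nonzero by simp
qed

lemma degree_eq_coeff_ratio:
  assumes "cf h1 d \<noteq> cf h2 d"
  shows "of_nat (degree f) = (cf a (int d - 1) - cf h1 (int d - 1) - cf h2 (int d - 1)
    - of_nat d * cf h2 d) / (cf h2 d - cf h1 d)"
  using subleading_coeff_balance assms by (simp add: field_simps)

end

lemma neg_pair_eq_csqrt_square: "{z, - z} = {csqrt (z ^ 2), - csqrt (z ^ 2)}"
proof -
  have "csqrt (z ^ 2) = z \<or> csqrt (z ^ 2) = - z"
    by (metis power2_csqrt power2_eq_iff)
  then show ?thesis by auto
qed

theorem theorem30:
  fixes f a b h1 h2 :: "complex poly"
    and d df :: nat and c1 c2 A B :: complex
  assumes nz: "f \<noteq> 0" "a \<noteq> 0" "b \<noteq> 0" "h1 \<noteq> 0" "h2 \<noteq> 0"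
    and hb: "b = - (h1 * h2)"
    and heq: "f * a = pcompose f [:-1, 1:] * h1
                      + pcompose f [:1, 1:] * pcompose h2 [:1, 1:]"
    and hd: "d = max (degree a) (max (degree h1) (degree h2))"
    and hdf: "df = degree f"
    and hc1: "c1 = lead_coeff h1" and hc2: "c2 = lead_coeff h2"
    and hA: "A = lead_coeff a" and hB: "B = lead_coeff b"
  shows
   "(degree a = degree h1 \<and> degree h1 > degree h2 \<longrightarrow>
       c1 = A \<and> c2 = - B / A \<and>
       of_nat df = (cf a (int d - 1) - cf h1 (int d - 1) - cf h2 (int d - 1)) / (- A))
  \<and> (degree a = degree h2 \<and> degree h2 > degree h1 \<longrightarrow>
       c1 = - B / A \<and> c2 = A \<and>
       of_nat df = (cf a (int d - 1) - cf h1 (int d - 1) - cf h2 (int d - 1)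
                    - of_nat d * A) / A)
  \<and> (degree h1 = degree h2 \<and> degree h2 > degree a \<longrightarrow>
       {c1, c2} = {csqrt B, - csqrt B} \<and>
       of_nat df = (cf a (int d - 1) - cf h1 (int d - 1) - cf h2 (int d - 1)
                    - of_nat d * cf h2 (int d)) / (cf h2 (int d) - cf h1 (int d)))
  \<and> (degree h1 = degree h2 \<and> degree h2 = degree a \<longrightarrow>
       [:-B, -A, 1:] = [:-c1, 1:] * [:-c2, 1:] \<and>
       (c1 = c2 \<longrightarrow>
          (cf a (int d - 2) - cf h1 (int d - 2)
             - (cf h2 (int d - 2) + (of_nat d - 1) * cf h2 (int d - 1)
                + of_nat (d choose 2) * cf h2 (int d)))
          + of_nat df * (cf h1 (int d - 1) - (cf h2 (int d - 1) + of_nat d * cf h2 (int d)))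
          - of_nat (df choose 2) * A = 0) \<and>
       (c1 \<noteq> c2 \<longrightarrow>
          of_nat df = (cf a (int d - 1) - cf h1 (int d - 1) - cf h2 (int d - 1)
                    - of_nat d * cf h2 (int d)) / (cf h2 (int d) - cf h1 (int d))))"
proof -
  interpret shift_equation f a h1 h2 d
    using nz(1) heq hd by unfold_locales auto
  have "degree a \<le> d" "degree h1 \<le> d" "degree h2 \<le> d"
    using hd by auto
  then have top: "cf a d = (if degree a = d then A else 0)"
      "cf h1 d = (if degree h1 = d then c1 else 0)" "cf h2 d = (if degree h2 = d then c2 else 0)"
    using hA hc1 hc2 by (simp_all add: cf_at_degree_bound)
  have B: "B = - (c1 * c2)"
    using hB hb hc1 hc2 by (simp add: lead_coeff_mult)
  have "A \<noteq> 0" "c1 \<noteq> 0"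
    using hA hc1 nz by simp_all
  note lead = leading_coeff_balance and ratio = degree_eq_coeff_ratio[folded hdf]
  show ?thesis
    apply (intro conjI; intro impI; elim conjE)
    subgoal premises deg
    proof -
      have "cf a d = A" "cf h1 d = c1" "cf h2 d = 0"
        using deg hd top by auto
      then show ?thesis
        using lead B ratio \<open>A \<noteq> 0\<close> by (auto simp: field_simps)
    qed
    subgoal premises deg
    proof -
      have "cf a d = A" "cf h1 d = 0" "cf h2 d = c2"
        using deg hd top by auto
      then show ?thesis
        using lead B ratio \<open>A \<noteq> 0\<close> by (auto simp: field_simps)
    qed
    subgoal premises deg
    proof -
      have "cf a d = 0" "cf h1 d = c1" "cf h2 d = c2"
        using deg hd top by auto
      moreover from this have "c2 = - c1"
        using lead by (simp add: add_eq_0_iff)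
      ultimately show ?thesis
        using B ratio \<open>c1 \<noteq> 0\<close> neg_pair_eq_csqrt_square[of c1]
        by (simp add: power2_eq_square)
    qed
    subgoal premises deg
    proof -
      have "cf a d = A" "cf h1 d = c1" "cf h2 d = c2"
        using deg hd top by auto
      then show ?thesis
        using lead B ratio subsubleading_coeff_balance[folded hdf] by (auto simp: algebra_simps)
    qed
    done
qed

end
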